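(* Let $G$ be a connected graph with minimum degree $\delta\geq 2$ such that for every edge $v_iv_j\in E(G)$ we have $|d_i-d_j|\leq (2k-1)^{2}$, where $k=\min\{d_i,d_j\}$. Then $GA(G)>ABC(G)$.
   Context: All graphs are finite, simple and undirected; $d_i$ denotes the degree of vertex $v_i$. The first geometric-arithmetic index is $GA(G)=\sum_{v_iv_j\in E(G)}\frac{2\sqrt{d_id_j}}{d_i+d_j}$ and the atom-bond connectivity index is $ABC(G)=\sum_{v_iv_j\in E(G)}\sqrt{\frac{d_i+d_j-2}{d_id_j}}$. *)

theory Defs
  imports Complex_Main
begin

definition simple_graph :: "'a set \<Rightarrow> 'a set set \<Rightarrow> bool" where
  "simple_graph V E \<longleftrightarrow> finite V \<and> (\<forall>e\<in>E. e \<subseteq> V \<and> card e = 2)"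

definition adj :: "'a set set \<Rightarrow> 'a \<Rightarrow> 'a \<Rightarrow> bool" where
  "adj E u v \<longleftrightarrow> {u, v} \<in> E"

definition degree :: "'a set set \<Rightarrow> 'a \<Rightarrow> nat" where
  "degree E v = card {e \<in> E. v \<in> e}"

definition connected_graph :: "'a set \<Rightarrow> 'a set set \<Rightarrow> bool" where
  "connected_graph V E \<longleftrightarrow> V \<noteq> {} \<and> (\<forall>u\<in>V. \<forall>v\<in>V. (adj E)\<^sup>*\<^sup>* u v)"

definition min_degree :: "'a set \<Rightarrow> 'a set set \<Rightarrow> nat" where
  "min_degree V E = Min (degree E ` V)"

text \<open>Each edge e = {u,v} contributes f (d_u) (d_v); f symmetric in the uses below.\<close>
definition edge_sum :: "'a set set \<Rightarrow> (real \<Rightarrow> real \<Rightarrow> real) \<Rightarrow> real" where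
  "edge_sum E f = (\<Sum>e\<in>E. (THE r. \<exists>u v. e = {u, v} \<and> r = f (real (degree E u)) (real (degree E v))))"

definition GA_index :: "'a set set \<Rightarrow> real" where
  "GA_index E = edge_sum E (\<lambda>a b. 2 * sqrt (a * b) / (a + b))"

definition ABC_index :: "'a set set \<Rightarrow> real" where
  "ABC_index E = edge_sum E (\<lambda>a b. sqrt ((a + b - 2) / (a * b)))"

end

theory Submission imports Defs begin

text \<open>For an edge with end degrees \<open>k \<le> k + t\<close> the contribution to GA exceeds the one to
ABC exactly when \<open>(2k + t)\<^sup>2 (2k + t - 2) < 4 k\<^sup>2 (k + t)\<^sup>2\<close>. The difference of the two sides
is \<open>4k\<^sup>2((k - 1)\<^sup>2 + 1) + t(2k + 1) + (t(2k - 1) + t\<^sup>2)((2k - 1)\<^sup>2 - t)\<close>, which is positive as soon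
as \<open>t \<le> (2k - 1)\<^sup>2\<close>. Summing the strict edgewise inequality over the edge set, nonempty
because \<open>V \<noteq> {}\<close> (the only use of connectedness), gives the theorem.\<close>

lemma cubic_gap_pos:
  fixes k t :: real
  assumes "k \<ge> 1" "t \<ge> 0" "t \<le> (2*k - 1)^2"
  shows "(2*k + t)^2 * (2*k + t - 2) < 4 * k^2 * (k + t)^2"
proof -
  have gap: "4 * k^2 * (k + t)^2 - (2*k + t)^2 * (2*k + t - 2)
      = 4 * k^2 * ((k - 1)^2 + 1) + t * (2*k + 1) + (t * (2*k - 1) + t^2) * ((2*k - 1)^2 - t)"
    by (simp add: power2_eq_square algebra_simps)
  have "4 * k^2 * ((k - 1)^2 + 1) > 0"
    using assms(1) by (simp add: add_nonneg_pos)
  moreover have "t * (2*k + 1) \<ge> 0"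
    using assms(1,2) by simp
  moreover have "(t * (2*k - 1) + t^2) * ((2*k - 1)^2 - t) \<ge> 0"
    using assms by simp
  ultimately show ?thesis
    using gap by linarith
qed

lemma degree_sum_cubic_lt:
  fixes a b :: real
  assumes "a \<ge> 1" "b \<ge> 1" "\<bar>a - b\<bar> \<le> (2 * min a b - 1)^2"
  shows "(a + b)^2 * (a + b - 2) < 4 * (a * b)^2"
proof -
  have "(2*a + (b - a))^2 * (2*a + (b - a) - 2) < 4 * a^2 * (a + (b - a))^2"
    if "a \<le> b" "\<bar>a - b\<bar> \<le> (2 * min a b - 1)^2" "a \<ge> 1" for a b :: real
    using that by (intro cubic_gap_pos) auto
  from this[of a b] this[of b a] assms show ?thesis
    by (cases "a \<le> b") (auto simp: power_mult_distrib algebra_simps min_def)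
qed

lemma ABC_term_lt_GA_term:
  fixes a b :: real
  assumes "a \<ge> 1" "b \<ge> 1" "\<bar>a - b\<bar> \<le> (2 * min a b - 1)^2"
  shows "sqrt ((a + b - 2) / (a * b)) < 2 * sqrt (a * b) / (a + b)"
proof -
  have pos: "a * b > 0" "a + b > 0"
    using assms(1,2) by auto
  have "(a + b - 2) * (a + b)^2 < 4 * (a * b) * (a * b)"
    using degree_sum_cubic_lt[OF assms] by (simp add: power2_eq_square algebra_simps)
  then have "(a + b - 2) / (a * b) < 4 * (a * b) / (a + b)^2"
    using pos by (simp add: divide_simps)
  then have "sqrt ((a + b - 2) / (a * b)) < sqrt (4 * (a * b) / (a + b)^2)"
    by simp
  also have "\<dots> = 2 * sqrt (a * b) / (a + b)"
    using pos by (simp add: real_sqrt_divide real_sqrt_mult)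
  finally show ?thesis .
qed

lemma edge_sum_term:
  fixes f :: "'b \<Rightarrow> 'b \<Rightarrow> 'c" and d :: "'a \<Rightarrow> 'b"
  assumes "\<And>x y. f x y = f y x"
  shows "(THE r. \<exists>u v. {a, b} = {u, v} \<and> r = f (d u) (d v)) = f (d a) (d b)"
proof (rule the_equality)
  fix r
  assume "\<exists>u v. {a, b} = {u, v} \<and> r = f (d u) (d v)"
  then show "r = f (d a) (d b)"
    using assms by (auto simp: doubleton_eq_iff)
qed blast

lemma edge_sum_strict_mono:
  assumes "simple_graph V E" "E \<noteq> {}"
    and "\<And>x y. f x y = f y x" "\<And>x y. g x y = g y x"
    and "\<And>u v. {u, v} \<in> E \<Longrightarrow> f (real (degree E u)) (real (degree E v))
                                  < g (real (degree E u)) (real (degree E v))"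
  shows "edge_sum E f < edge_sum E g"
  unfolding edge_sum_def
proof (rule sum_strict_mono)
  have "E \<subseteq> Pow V" "finite V"
    using assms(1) by (auto simp: simple_graph_def)
  then show "finite E"
    by (meson finite_Pow_iff finite_subset)
next
  fix e
  assume "e \<in> E"
  then obtain u v where "e = {u, v}"
    using assms(1) by (auto simp: simple_graph_def card_2_iff)
  with \<open>e \<in> E\<close> show "(THE r. \<exists>u v. e = {u, v} \<and> r = f (real (degree E u)) (real (degree E v)))
      < (THE r. \<exists>u v. e = {u, v} \<and> r = g (real (degree E u)) (real (degree E v)))"
    using assms(5)
      edge_sum_term[where f = f and d = "\<lambda>x. real (degree E x)" and a = u and b = v, OF assms(3)]
      edge_sum_term[where f = g and d = "\<lambda>x. real (degree E x)" and a = u and b = v, OF assms(4)]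
    by simp
qed (fact assms(2))

lemma degree_ge_min_degree:
  assumes "simple_graph V E" "v \<in> V"
  shows "degree E v \<ge> min_degree V E"
  using assms by (auto simp: min_degree_def simple_graph_def)

lemma edges_nonempty_if_min_degree_pos:
  assumes "simple_graph V E" "V \<noteq> {}" "min_degree V E > 0"
  shows "E \<noteq> {}"
proof
  assume "E = {}"
  obtain v where "v \<in> V"
    using assms(2) by blast
  with assms(1,3) \<open>E = {}\<close> show False
    using degree_ge_min_degree[of V E v] by (simp add: degree_def)
qed

theorem theorem3p6:
  fixes V :: "'a set" and E :: "'a set set"
  assumes "simple_graph V E"
    and "connected_graph V E"
    and "min_degree V E \<ge> 2"
    and "\<forall>u v. {u, v} \<in> E \<longrightarrow>
           \<bar>real (degree E u) - real (degree E v)\<bar>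
             \<le> (2 * real (min (degree E u) (degree E v)) - 1) ^ 2"
  shows "GA_index E > ABC_index E"
  unfolding GA_index_def ABC_index_def
proof (rule edge_sum_strict_mono[OF assms(1)])
  show "E \<noteq> {}"
    using assms(1-3) by (intro edges_nonempty_if_min_degree_pos) (auto simp: connected_graph_def)
next
  fix u v
  assume uv: "{u, v} \<in> E"
  then have "u \<in> V" "v \<in> V"
    using assms(1) by (auto simp: simple_graph_def)
  then have "degree E u \<ge> 2" "degree E v \<ge> 2"
    using degree_ge_min_degree[OF assms(1)] assms(3) by (meson le_trans)+
  with uv assms(4) show "sqrt ((real (degree E u) + real (degree E v) - 2) / (real (degree E u) * real (degree E v)))
      < 2 * sqrt (real (degree E u) * real (degree E v)) / (real (degree E u) + real (degree E v))"
    by (intro ABC_term_lt_GA_term) (auto simp: of_nat_min)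
qed (simp_all add: algebra_simps)

end
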